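(* For all integers $n\ge 2$, $$(n+1)\,b_n=(n-1)\left(2b_{n-1}+3b_{n-2}\right).$$
   Context: Let $X(\theta)=1+2\cos\theta$ and, for $k\ge 0$, $\chi_k(\theta)=1+2\sum_{j=1}^{k}\cos(j\theta)$ (the character of the $(k+1)$-dimensional irreducible representation of the Lie algebra $A_1$). For $n\ge 0$ the integers $b_n^{(k)}$, $0\le k\le n$, are the unique coefficients with $X(\theta)^n=\sum_{k=0}^{n}b_n^{(k)}\chi_k(\theta)$ for all real $\theta$. Write $b_n=b_n^{(0)}$. *)

theory Defs
  imports Complex_Main
begin

definition X :: "real \<Rightarrow> real" where
  "X \<theta> = 1 + 2 * cos \<theta>"

definition chi :: "nat \<Rightarrow> real \<Rightarrow> real" where
  "chi k \<theta> = 1 + 2 * (\<Sum>j=1..k. cos (real j * \<theta>))"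

text \<open>The coefficients b_n^(k), 0 <= k <= n: the unique integers with
  X(theta)^n = sum_{k=0}^n b_n^(k) chi_k(theta) for all real theta.
  Coefficients outside 0..n are normalised to 0 for uniqueness.\<close>
definition bcoef :: "nat \<Rightarrow> nat \<Rightarrow> int" where
  "bcoef n = (THE c. (\<forall>k>n. c k = 0) \<and>
     (\<forall>\<theta>::real. X \<theta> ^ n = (\<Sum>k=0..n. of_int (c k) * chi k \<theta>)))"

definition b :: "nat \<Rightarrow> int" where
  "b n = bcoef n 0"

end

(*
  Expanding X(theta)^n = (1 + e^{i theta} + e^{-i theta})^n gives
  X(theta)^n = sum_m T(n,m) cos(m theta) with the trinomial coefficients T(n,m), the coefficients
  of x^m in (1/x + 1 + x)^n. Since chi_k - chi_{k-1} = 2 cos(k theta), Abel summation turns this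
  into X^n = sum_k (T(n,k) - T(n,k+1)) chi_k, so b_n = T(n,0) - T(n,1). The trinomial coefficients
  satisfy the three-term relation obtained from the differential equation of (1/x + 1 + x)^n;
  combined with Pascal's rule T(n+1,m) = T(n,m-1) + T(n,m) + T(n,m+1), it yields the recurrence.
*)
theory Submission imports Defs begin

fun trinomial :: "nat \<Rightarrow> int \<Rightarrow> int" where
  "trinomial 0 m = (if m = 0 then 1 else 0)"
| "trinomial (Suc n) m = trinomial n (m - 1) + trinomial n m + trinomial n (m + 1)"

lemma trinomial_eq_0: "int n < \<bar>m\<bar> \<Longrightarrow> trinomial n m = 0"
  by (induction n arbitrary: m) auto

lemma trinomial_uminus: "trinomial n (- m) = trinomial n m"
proof (induction n arbitrary: m)
  case (Suc n)
  have "trinomial n (- m - 1) = trinomial n (m + 1)" "trinomial n (- m + 1) = trinomial n (m - 1)"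
    using Suc[of "m + 1"] Suc[of "m - 1"] by simp_all
  then show ?case using Suc[of m] by simp
qed simp

text \<open>Coefficient of \<open>x^m\<close> in \<open>x (1/x + 1 + x) f' = n (x - 1/x) f\<close> for \<open>f = (1/x + 1 + x)^n\<close>.\<close>
lemma trinomial_three_term:
  "(m - 1 - int n) * trinomial n (m - 1) + m * trinomial n m
     + (m + 1 + int n) * trinomial n (m + 1) = 0"
proof (induction n arbitrary: m)
  case (Suc n)
  show ?case
    using Suc[of "m - 1"] Suc[of m] Suc[of "m + 1"] by (simp add: algebra_simps)
qed simp

lemma sum_int_ivl_shift: "(\<Sum>m\<in>{p..q::int}. g (m + 1)) = (\<Sum>m\<in>{p+1..q+1}. g m)"
  by (rule sum.reindex_bij_witness[of _ "\<lambda>m. m - 1" "\<lambda>m. m + 1"]) auto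

lemma sum_int_ivl_shift_vanishing_ends:
  assumes "g p = 0" "g (q + 1) = 0" "p \<le> q"
  shows "(\<Sum>m\<in>{p..q::int}. g (m + 1)) = (\<Sum>m\<in>{p..q}. g m)"
proof -
  have left: "{p..q+1} = insert p {p+1..q+1}" and right: "{p..q+1} = insert (q+1) {p..q}"
    using assms(3) by auto
  have "(\<Sum>m\<in>{p+1..q+1}. g m) = (\<Sum>m\<in>{p..q+1}. g m)"
    unfolding left using assms(1) by (subst sum.insert) auto
  also have "\<dots> = (\<Sum>m\<in>{p..q}. g m)"
    unfolding right using assms(2) by (subst sum.insert) auto
  finally show ?thesis by (simp add: sum_int_ivl_shift)
qed

lemma X_power_eq_sum_trinomial_cos_int:
  assumes "int n \<le> N"
  shows "X \<theta> ^ n = (\<Sum>m\<in>{-N..N}. of_int (trinomial n m) * cos (of_int m * \<theta>))"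
  using assms
proof (induction n)
  case 0
  have "{-N..N} = insert 0 ({-N..N} - {0})" using 0 by auto
  then show ?case by (subst \<open>{-N..N} = _\<close>, subst sum.insert) auto
next
  case (Suc n)
  define F where "F m = of_int (trinomial n m) * cos (of_int m * \<theta>)" for m
  define G where "G m = of_int (trinomial n (m - 1)) * cos (of_int m * \<theta>)" for m
  define H where "H m = of_int (trinomial n (m + 1)) * cos (of_int m * \<theta>)" for m
  have prod_to_sum: "X \<theta> * F m = F m + G (m + 1) + H (m - 1)" for m
    by (simp add: X_def F_def G_def H_def cos_add cos_diff algebra_simps)
  have IH: "X \<theta> ^ n = (\<Sum>m\<in>{-N..N}. F m)"
    using Suc by (simp add: F_def)
  have "X \<theta> ^ Suc n = (\<Sum>m\<in>{-N..N}. F m + G (m + 1) + H (m - 1))"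
    unfolding power_Suc IH sum_distrib_left prod_to_sum ..
  also have "\<dots> = (\<Sum>m\<in>{-N..N}. F m) + (\<Sum>m\<in>{-N..N}. G (m + 1)) + (\<Sum>m\<in>{-N..N}. H (m - 1))"
    by (simp add: sum.distrib)
  also have "(\<Sum>m\<in>{-N..N}. G (m + 1)) = (\<Sum>m\<in>{-N..N}. G m)"
    using Suc.prems by (intro sum_int_ivl_shift_vanishing_ends) (auto simp: G_def trinomial_eq_0)
  also have "(\<Sum>m\<in>{-N..N}. H (m - 1)) = (\<Sum>m\<in>{-N..N}. H m)"
    using Suc.prems sum_int_ivl_shift_vanishing_ends[of "\<lambda>m. H (m - 1)" "-N" N]
    by (auto simp: H_def trinomial_eq_0)
  finally show ?case
    by (simp add: F_def G_def H_def algebra_simps flip: sum.distrib)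
qed

lemma sum_symmetric_int_ivl:
  "(\<Sum>m\<in>{-int N..int N}. f m) = f 0 + (\<Sum>k=1..N. f (int k) + f (- int k))"
proof (induction N)
  case (Suc N)
  have "{-int (Suc N)..int (Suc N)} = insert (int N + 1) (insert (- (int N + 1)) {-int N..int N})"
    by auto
  then show ?case using Suc by (simp add: ac_simps)
qed simp

lemma X_power_eq_sum_trinomial_cos:
  "X \<theta> ^ n = of_int (trinomial n 0) + 2 * (\<Sum>k=1..n. of_int (trinomial n (int k)) * cos (real k * \<theta>))"
  using X_power_eq_sum_trinomial_cos_int[of n "int n" \<theta>]
  by (simp add: sum_symmetric_int_ivl trinomial_uminus sum_distrib_left)

text \<open>Averaging over the shifts \<open>\<theta> \<plusminus> \<pi>/(N+1)\<close> kills the top frequency and multiplies each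
  lower coefficient by the positive factor \<open>2 (1 + cos (k\<pi>/(N+1)))\<close>.\<close>
lemma cos_sum_eq_0_imp_coeff_eq_0:
  fixes d :: "nat \<Rightarrow> real"
  assumes "\<And>\<theta>. (\<Sum>k\<le>N. d k * cos (real k * \<theta>)) = 0" and "k \<le> N"
  shows "d k = 0"
  using assms
proof (induction N arbitrary: d k)
  case (Suc N)
  define h where "h = pi / real (Suc N)"
  define d' where "d' k = 2 * d k * (cos (real k * h) + 1)" for k
  have "(\<Sum>k\<le>N. d' k * cos (real k * \<theta>)) = 0" for \<theta>
  proof -
    have "0 = (\<Sum>k\<le>Suc N. d k * cos (real k * (\<theta> + h))) + (\<Sum>k\<le>Suc N. d k * cos (real k * (\<theta> - h)))
            + 2 * (\<Sum>k\<le>Suc N. d k * cos (real k * \<theta>))"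
      using Suc.prems(1) by simp
    also have "\<dots> = (\<Sum>k\<le>Suc N. d' k * cos (real k * \<theta>))"
      by (simp add: d'_def sum_distrib_left cos_add cos_diff algebra_simps flip: sum.distrib)
    also have "\<dots> = (\<Sum>k\<le>N. d' k * cos (real k * \<theta>))"
      by (simp add: d'_def h_def)
    finally show ?thesis by simp
  qed
  then have d'_eq_0: "d' k = 0" if "k \<le> N" for k
    using Suc.IH that by blast
  have low: "d k = 0" if "k \<le> N" for k
  proof -
    have "pi * real k < pi * (1 + real N)"
      using that by (intro mult_strict_left_mono) auto
    then have "real k * h < pi"
      by (simp add: h_def field_simps)
    then have "cos pi < cos (real k * h)"
      by (intro cos_monotone_0_pi) (auto simp: h_def)
    then show ?thesis using d'_eq_0[OF that] by (simp add: d'_def)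
  qed
  then have "d (Suc N) = 0" using Suc.prems(1)[of 0] by simp
  then show ?case using low Suc.prems(2) le_Suc_eq by blast
qed simp

lemma sum_mult_partial_sums_swap:
  fixes e a :: "nat \<Rightarrow> 'a::comm_semiring_1"
  shows "(\<Sum>k=0..n. e k * (\<Sum>j=1..k. a j)) = (\<Sum>j=1..n. a j * (\<Sum>k=j..n. e k))"
proof (induction n)
  case (Suc n)
  have "(\<Sum>j=1..Suc n. a j * (\<Sum>k=j..Suc n. e k))
        = (\<Sum>j=1..n. a j * (\<Sum>k=j..n. e k)) + e (Suc n) * (\<Sum>j=1..Suc n. a j)"
    by (simp add: distrib_left sum.distrib sum_distrib_left ac_simps)
  then show ?case using Suc by simp
qed simp

lemma sum_mult_chi:
  fixes e :: "nat \<Rightarrow> real"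
  shows "(\<Sum>k=0..n. e k * chi k \<theta>)
           = (\<Sum>k=0..n. e k) + 2 * (\<Sum>j=1..n. (\<Sum>k=j..n. e k) * cos (real j * \<theta>))"
proof -
  have "(\<Sum>k=0..n. e k * chi k \<theta>)
        = (\<Sum>k=0..n. e k) + 2 * (\<Sum>k=0..n. e k * (\<Sum>j=1..k. cos (real j * \<theta>)))"
    by (simp add: chi_def algebra_simps sum.distrib sum_distrib_left)
  also note sum_mult_partial_sums_swap
  finally show ?thesis by (simp add: mult.commute)
qed

lemma chi_sum_eq_0_imp_coeff_eq_0:
  fixes e :: "nat \<Rightarrow> real"
  assumes "\<And>\<theta>. (\<Sum>k=0..n. e k * chi k \<theta>) = 0" and "k \<le> n"
  shows "e k = 0"
proof -
  define g where "g j = (if j = 0 then (\<Sum>k=0..n. e k) else 2 * (\<Sum>k=j..n. e k))" for j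
  have "(\<Sum>j\<le>n. g j * cos (real j * \<theta>)) = (\<Sum>k=0..n. e k * chi k \<theta>)" for \<theta>
  proof -
    have "{..n} = insert 0 {1..n}" by auto
    then have "(\<Sum>j\<le>n. g j * cos (real j * \<theta>))
               = (\<Sum>k=0..n. e k) + (\<Sum>j=1..n. 2 * (\<Sum>k=j..n. e k) * cos (real j * \<theta>))"
      by (simp add: g_def)
    then show ?thesis
      by (simp add: sum_mult_chi sum_distrib_left mult.assoc flip: sum_distrib_left)
  qed
  then have g_eq_0: "g j = 0" if "j \<le> n" for j
    using cos_sum_eq_0_imp_coeff_eq_0 assms(1) that by metis
  have tails: "(\<Sum>i=j..n. e i) = 0" for j
  proof (cases "j \<le> n")
    case True
    then show ?thesis using g_eq_0[OF True] by (simp add: g_def split: if_splits)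
  qed simp
  have "(\<Sum>i=k..n. e i) = e k + (\<Sum>i=Suc k..n. e i)"
    using assms(2) by (simp add: sum.atLeast_Suc_atMost)
  then show ?thesis using tails by simp
qed

lemma X_power_eq_sum_chi:
  "X \<theta> ^ n = (\<Sum>k=0..n. of_int (trinomial n (int k) - trinomial n (int k + 1)) * chi k \<theta>)"
proof -
  have telescope: "(\<Sum>k=j..n. real_of_int (trinomial n (int k)) - of_int (trinomial n (int k + 1)))
                     = of_int (trinomial n (int j))" if "j \<le> Suc n" for j
    using sum_Suc_diff[OF that, of "\<lambda>k. - real_of_int (trinomial n (int k))"]
    by (simp add: trinomial_eq_0 add.commute)
  show ?thesis
    by (simp add: sum_mult_chi telescope X_power_eq_sum_trinomial_cos)
qed

lemma bcoef_eq_trinomial: "bcoef n k = trinomial n (int k) - trinomial n (int k + 1)"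
proof -
  let ?P = "\<lambda>c. (\<forall>k>n. c k = 0) \<and> (\<forall>\<theta>. X \<theta> ^ n = (\<Sum>k=0..n. of_int (c k) * chi k \<theta>))"
  let ?c = "\<lambda>k. trinomial n (int k) - trinomial n (int k + 1)"
  have c: "?P ?c" by (simp add: trinomial_eq_0 X_power_eq_sum_chi)
  have unique: "c = ?c" if "?P c" for c
  proof
    fix k
    show "c k = ?c k"
    proof (cases "k \<le> n")
      case True
      have "(\<Sum>k=0..n. real_of_int (c k - ?c k) * chi k \<theta>) = 0" for \<theta>
        using that c by (simp add: left_diff_distrib sum_subtractf)
      then show ?thesis using chi_sum_eq_0_imp_coeff_eq_0 True by fastforce
    qed (use that c in auto)
  qed
  have "bcoef n = ?c"
    unfolding bcoef_def by (rule the_equality[where P = ?P, OF c unique])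
  then show ?thesis by simp
qed

lemma b_eq_trinomial: "b n = trinomial n 0 - trinomial n 1"
  by (simp add: b_def bcoef_eq_trinomial)

theorem mainTheorem10:
  fixes n :: nat
  assumes "n \<ge> 2"
  shows "int (n + 1) * b n = int (n - 1) * (2 * b (n - 1) + 3 * b (n - 2))"
proof -
  obtain k where n: "n = Suc (Suc k)" using assms by (metis add_2_eq_Suc le_Suc_ex)
  have three_term_at_1: "- int j * trinomial j 0 + trinomial j 1 + (2 + int j) * trinomial j 2 = 0" for j
    using trinomial_three_term[of 1 j] trinomial_uminus[of j 1] by simp
  have pascal_0: "trinomial (Suc j) 0 = trinomial j 0 + 2 * trinomial j 1" for j
    using trinomial_uminus[of j 1] by simp
  have pascal_1: "trinomial (Suc j) 1 = trinomial j 0 + trinomial j 1 + trinomial j 2" for j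
    by simp
  show ?thesis
    unfolding n b_eq_trinomial
    using three_term_at_1[of k] three_term_at_1[of "Suc k"] pascal_0[of k] pascal_1[of k]
      pascal_0[of "Suc k"] pascal_1[of "Suc k"]
    by (simp add: algebra_simps)
qed

end
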